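(* Let $b>0$, $\rho\in(\frac14,\frac12)$ and $h\in(0,1)$. If $m\in\mathbb Z$ satisfies $|m|>(1+\sqrt2)b/2$, then \[ \lambda_1\bigl(\mathcal H^{b,\rho}_{m,h}\bigr)>\inf_{\ell\in\mathbb Z}\lambda_1\bigl(\mathcal H^{b,\rho}_{\ell,h}\bigr). \]
   Context: Let $\delta=h^{\rho-\frac12}$. For $m\in\mathbb Z$, $\mathcal H^{b,\rho}_{m,h}$ is the self-adjoint operator in the weighted space $L^2((0,\delta);(1-h^{1/2}\tau)d\tau)$ associated with the quadratic form \[ v\mapsto\int_0^\delta\Bigl(|v'(\tau)|^2+\frac{h}{(1-h^{1/2}\tau)^2}\Bigl(m-\frac b2(1-h^{1/2}\tau)^2\Bigr)^2|v(\tau)|^2\Bigr)(1-h^{1/2}\tau)\,d\tau-|v(0)|^2 \] on $\{v\in H^1((0,\delta)):v(\delta)=0\}$ (boundary conditions $v'(0)=-v(0)$, $v(\delta)=0$). $\lambda_1(\cdot)$ denotes the lowest eigenvalue. *)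

theory Defs
  imports "HOL-Analysis.Analysis"
begin

text \<open>Form domain: v in H^1((0,delta)) with v(delta) = 0, represented by a continuous
  representative v on [0,delta] together with its weak derivative g in L^2(0,delta),
  v(x) = v(0) + int_0^x g.\<close>
definition H1_dirichlet_right :: "real \<Rightarrow> (real \<Rightarrow> real) \<Rightarrow> (real \<Rightarrow> real) \<Rightarrow> bool" where
  "H1_dirichlet_right \<delta> v g \<longleftrightarrow>
     g \<in> borel_measurable lborel \<and>
     set_integrable lborel {0..\<delta>} (\<lambda>t. (g t)\<^sup>2) \<and>
     (\<forall>x\<in>{0..\<delta>}. v x = v 0 + (LBINT t=0..x. g t)) \<and>
     v \<delta> = 0"

definition wgt :: "real \<Rightarrow> real \<Rightarrow> real" where
  "wgt h \<tau> = 1 - sqrt h * \<tau>"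

definition qform :: "real \<Rightarrow> real \<Rightarrow> real \<Rightarrow> int \<Rightarrow> (real \<Rightarrow> real) \<Rightarrow> (real \<Rightarrow> real) \<Rightarrow> real" where
  "qform b \<rho> h m v g =
     (LBINT \<tau>=0..h powr (\<rho> - 1/2).
        ((g \<tau>)\<^sup>2 + h / (wgt h \<tau>)\<^sup>2 * (real_of_int m - b/2 * (wgt h \<tau>)\<^sup>2)\<^sup>2 * (v \<tau>)\<^sup>2) * wgt h \<tau>)
     - (v 0)\<^sup>2"

definition wnorm2 :: "real \<Rightarrow> real \<Rightarrow> (real \<Rightarrow> real) \<Rightarrow> real" where
  "wnorm2 \<rho> h v = (LBINT \<tau>=0..h powr (\<rho> - 1/2). (v \<tau>)\<^sup>2 * wgt h \<tau>)"

text \<open>Lowest eigenvalue lambda_1 of H^{b,rho}_{m,h}, via the variational (min-max)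
  characterization: infimum of the Rayleigh quotient over the form domain.\<close>
definition lambda1 :: "real \<Rightarrow> real \<Rightarrow> int \<Rightarrow> real \<Rightarrow> real" where
  "lambda1 b \<rho> m h =
     Inf {qform b \<rho> h m v g / wnorm2 \<rho> h v | v g.
            H1_dirichlet_right (h powr (\<rho> - 1/2)) v g \<and> wnorm2 \<rho> h v \<noteq> 0}"

end

theory Submission
  imports Defs
begin

text \<open>
  With the weight \<open>w = 1 - h\<^sup>1\<^sup>/\<^sup>2 \<tau>\<close>, the form is \<open>\<integral> (|v'|\<^sup>2 + V\<^sub>m |v|\<^sup>2) w - |v(0)|\<^sup>2\<close> with
  effective potential \<open>V\<^sub>m = h w\<^sup>-\<^sup>2 (m - b w\<^sup>2/2)\<^sup>2\<close>. Since \<open>0 < w \<le> 1\<close> on \<open>[0,\<delta>]\<close>,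
  \<open>V\<^sub>m - V\<^sub>0 = h m\<^sup>2/w\<^sup>2 - h m b \<ge> h (m\<^sup>2 - |m| b)\<close> pointwise, so every Rayleigh quotient for \<open>m\<close>
  exceeds the corresponding one for \<open>0\<close> by this constant, which is positive once \<open>|m| > b\<close>.
  Hence \<open>\<lambda>\<^sub>1(m) > \<lambda>\<^sub>1(0) \<ge> inf\<^sub>\<ell> \<lambda>\<^sub>1(\<ell>)\<close>; of the hypotheses only \<open>|m| > b\<close> and \<open>\<rho> > 0\<close> are needed.

  Since \<open>Inf\<close> of a set that is not bounded below is a junk value, the real work is a lower
  bound on the Rayleigh quotients uniform in \<open>\<ell>\<close>. It comes from the trace inequality
  \<open>s |v(0)|\<^sup>2 \<le> 2 \<integral>\<^sub>0\<^sup>s |v|\<^sup>2 + 2 s\<^sup>2 \<integral>\<^sub>0\<^sup>\<delta> |v'|\<^sup>2\<close> (Cauchy--Schwarz on \<open>v(0) = v(x) - \<integral>\<^sub>0\<^sup>x v'\<close>),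
  taken with \<open>s = (1 - h\<^sup>\<rho>)/2\<close> and combined with \<open>w \<ge> 1 - h\<^sup>\<rho>\<close>: it gives
  \<open>|v(0)|\<^sup>2 \<le> 4 (1 - h\<^sup>\<rho>)\<^sup>-\<^sup>2 \<parallel>v\<parallel>\<^sup>2 + \<integral> |v'|\<^sup>2 w\<close>.
\<close>

lemma one_less_powr_of_less_one:
  fixes x a :: real
  assumes "0 < x" "x < 1" "a < 0"
  shows "1 < x powr a"
  using assms powr01_less_one[of x "-a"] one_less_inverse[of "x powr (-a)"] by (simp add: powr_minus)

lemma wgt_bounds:
  assumes "0 < h" "0 \<le> \<tau>" "\<tau> \<le> h powr (\<rho> - 1/2)"
  shows "1 - h powr \<rho> \<le> wgt h \<tau>" and "wgt h \<tau> \<le> 1"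
proof -
  have "sqrt h * \<tau> \<le> sqrt h * h powr (\<rho> - 1/2)"
    using assms by (intro mult_left_mono) auto
  also have "\<dots> = h powr \<rho>"
    using assms(1) by (simp add: powr_half_sqrt[symmetric] powr_add[symmetric])
  finally show "1 - h powr \<rho> \<le> wgt h \<tau>" by (simp add: wgt_def)
  show "wgt h \<tau> \<le> 1" using assms by (simp add: wgt_def)
qed

lemma H1_dirichlet_right_set_integrable:
  assumes "H1_dirichlet_right D v g"
  shows "set_integrable lborel {0..D} g"
proof (rule set_integrable_bound)
  have [measurable]: "g \<in> borel_measurable lborel"
    using assms by (simp add: H1_dirichlet_right_def)
  show "set_integrable lborel {0..D} (\<lambda>t. 1 + (g t)\<^sup>2)"
    by (rule set_integral_add(1)[OF borel_integrable_atLeastAtMost'])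
      (use assms in \<open>auto simp: H1_dirichlet_right_def\<close>)
  show "set_borel_measurable lborel {0..D} g"
    unfolding set_borel_measurable_def by measurable
  have "\<bar>x\<bar> \<le> 1 + x\<^sup>2" for x :: real
    using zero_le_power2[of "\<bar>x\<bar> - 1"] zero_le_power2[of x] by (simp add: power2_diff)
  then show "AE t in lborel. t \<in> {0..D} \<longrightarrow> norm (g t) \<le> norm (1 + (g t)\<^sup>2)"
    by (simp add: add_increasing)
qed

lemma H1_dirichlet_right_integrable_on:
  assumes "H1_dirichlet_right D v g"
  shows "g integrable_on {0..D}" and "(\<lambda>t. (g t)\<^sup>2) integrable_on {0..D}"
  using H1_dirichlet_right_set_integrable[OF assms] assms
  by (auto simp: H1_dirichlet_right_def intro: set_borel_integral_eq_integral(1))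

lemma H1_dirichlet_right_eq_integral:
  assumes "H1_dirichlet_right D v g" "x \<in> {0..D}"
  shows "v x = v 0 + integral {0..x} g"
proof -
  have "set_integrable lborel {0..x} g"
    using assms by (intro set_integrable_subset[OF H1_dirichlet_right_set_integrable]) auto
  then have "(LBINT t=0..x. g t) = integral {0..x} g"
    using assms(2) interval_integral_eq_integral[of 0 x g] by (simp add: zero_ereal_def)
  moreover have "v x = v 0 + (LBINT t=0..x. g t)"
    using assms unfolding H1_dirichlet_right_def by blast
  ultimately show ?thesis by simp
qed

lemma H1_dirichlet_right_continuous_on:
  assumes "H1_dirichlet_right D v g"
  shows "continuous_on {0..D} v"
proof -
  have "continuous_on {0..D} (\<lambda>x. v 0 + integral {0..x} g)"
    by (intro continuous_intros indefinite_integral_continuous_1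
        H1_dirichlet_right_integrable_on[OF assms])
  then show ?thesis
    by (rule continuous_on_eq) (simp add: H1_dirichlet_right_eq_integral[OF assms, symmetric])
qed

lemma square_integral_le:
  fixes f :: "real \<Rightarrow> real"
  assumes "a \<le> b" and f: "f integrable_on {a..b}" and f2: "(\<lambda>t. (f t)\<^sup>2) integrable_on {a..b}"
  shows "(integral {a..b} f)\<^sup>2 \<le> (b - a) * integral {a..b} (\<lambda>t. (f t)\<^sup>2)"
proof (cases "a = b")
  case False
  define L where "L = b - a"
  define I where "I = integral {a..b} f"
  define J where "J = integral {a..b} (\<lambda>t. (f t)\<^sup>2)"
  define c where "c = I / L"
  have L: "0 < L" using False assms(1) by (simp add: L_def)
  have sq: "(\<lambda>t. (f t - c)\<^sup>2) = (\<lambda>t. ((f t)\<^sup>2 - (2*c) * f t) + c\<^sup>2)"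
    by (auto simp: power2_eq_square algebra_simps)
  have lin: "(\<lambda>t. (f t)\<^sup>2 - (2*c) * f t) integrable_on {a..b}"
    by (intro integrable_diff f2 integrable_on_mult_right f)
  have "0 \<le> integral {a..b} (\<lambda>t. (f t - c)\<^sup>2)"
    by (rule integral_nonneg) (use lin in \<open>simp_all add: sq integrable_add integrable_const_ivl\<close>)
  also have "\<dots> = J - 2*c*I + c\<^sup>2 * L"
    unfolding sq L_def using assms(1) f f2
    by (simp add: integral_add[OF lin integrable_const_ivl]
        integral_diff[OF f2 integrable_on_mult_right[OF f]] I_def J_def)
  also have "\<dots> = J - I\<^sup>2 / L"
    using L by (simp add: c_def power2_eq_square field_simps)
  finally show ?thesis
    using L by (simp add: I_def J_def L_def pos_divide_le_eq mult.commute)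
qed simp

lemma trace_inequality:
  assumes H: "H1_dirichlet_right D v g" and s: "0 < s" "s \<le> D"
  shows "s * (v 0)\<^sup>2 \<le> 2 * integral {0..s} (\<lambda>x. (v x)\<^sup>2) + 2 * s\<^sup>2 * integral {0..D} (\<lambda>t. (g t)\<^sup>2)"
proof -
  define G where "G = integral {0..D} (\<lambda>t. (g t)\<^sup>2)"
  note g = H1_dirichlet_right_integrable_on[OF H]
  have pointwise: "(v 0)\<^sup>2 \<le> 2 * (v x)\<^sup>2 + 2 * s * G" if x: "x \<in> {0..s}" for x
  proof -
    have sub: "{0..x} \<subseteq> {0..D}" using x s by auto
    have g2x: "(\<lambda>t. (g t)\<^sup>2) integrable_on {0..x}" by (rule integrable_on_subinterval[OF g(2) sub])
    have "(integral {0..x} g)\<^sup>2 \<le> x * integral {0..x} (\<lambda>t. (g t)\<^sup>2)"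
      using square_integral_le[of 0 x g] x integrable_on_subinterval[OF g(1) sub] g2x by simp
    also have "\<dots> \<le> s * G"
      unfolding G_def using x s
      by (intro mult_mono integral_subset_le[OF sub g2x g(2)] integral_nonneg[OF g2x]) auto
    finally have "(integral {0..x} g)\<^sup>2 \<le> s * G" .
    moreover have "(v 0)\<^sup>2 \<le> 2 * (v x)\<^sup>2 + 2 * (integral {0..x} g)\<^sup>2"
    proof -
      have "(v 0)\<^sup>2 = (v x - integral {0..x} g)\<^sup>2"
        using H1_dirichlet_right_eq_integral[OF H, of x] x s by simp
      also have "\<dots> \<le> 2 * (v x)\<^sup>2 + 2 * (integral {0..x} g)\<^sup>2"
        using zero_le_power2[of "v x + integral {0..x} g"] by (simp add: power2_eq_square algebra_simps)
      finally show ?thesis .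
    qed
    ultimately show ?thesis by linarith
  qed
  have "continuous_on {0..s} v"
    by (rule continuous_on_subset[OF H1_dirichlet_right_continuous_on[OF H]]) (use s in auto)
  then have v2: "(\<lambda>x. (v x)\<^sup>2) integrable_on {0..s}"
    by (intro integrable_continuous_interval continuous_intros)
  have "s * (v 0)\<^sup>2 = integral {0..s} (\<lambda>x. (v 0)\<^sup>2)" using s by simp
  also have "\<dots> \<le> integral {0..s} (\<lambda>x. 2 * (v x)\<^sup>2 + 2 * s * G)"
    by (rule integral_le) (use pointwise v2 in \<open>auto intro!: integrable_add integrable_on_mult_right\<close>)
  also have "\<dots> = integral {0..s} (\<lambda>x. 2 * (v x)\<^sup>2) + integral {0..s} (\<lambda>x. 2 * s * G)"
    by (rule integral_add[OF integrable_on_mult_right[OF v2] integrable_const_ivl])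
  also have "\<dots> = 2 * integral {0..s} (\<lambda>x. (v x)\<^sup>2) + 2 * s\<^sup>2 * G"
    using s by (simp add: power2_eq_square)
  finally show ?thesis by (simp add: G_def)
qed

definition eff_potential :: "real \<Rightarrow> real \<Rightarrow> int \<Rightarrow> real \<Rightarrow> real" where
  "eff_potential b h l \<tau> = h / (wgt h \<tau>)\<^sup>2 * (real_of_int l - b/2 * (wgt h \<tau>)\<^sup>2)\<^sup>2"

lemma eff_potential_nonneg: "0 \<le> h \<Longrightarrow> 0 \<le> eff_potential b h l \<tau>"
  by (simp add: eff_potential_def)

lemma eff_potential_gap:
  assumes "0 < h" "0 \<le> b" "0 < wgt h \<tau>" "wgt h \<tau> \<le> 1"
  shows "h * ((real_of_int m)\<^sup>2 - \<bar>real_of_int m\<bar> * b) \<le> eff_potential b h m \<tau> - eff_potential b h 0 \<tau>"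
proof -
  define w where "w = wgt h \<tau>"
  define M where "M = real_of_int m"
  have w: "w \<noteq> 0" "0 < w\<^sup>2" "w\<^sup>2 \<le> 1" using assms by (auto simp: w_def power_le_one)
  have "eff_potential b h m \<tau> - eff_potential b h 0 \<tau> = h * M\<^sup>2 / w\<^sup>2 - h * (M * b)"
    using w by (simp add: eff_potential_def w_def[symmetric] M_def[symmetric] field_simps
        power2_eq_square)
  moreover have "h * M\<^sup>2 \<le> h * M\<^sup>2 / w\<^sup>2"
    using w assms(1) by (simp add: le_divide_eq mult_left_le)
  moreover have "h * (M * b) \<le> h * (\<bar>M\<bar> * b)"
    using assms(1,2) by (intro mult_left_mono mult_right_mono) auto
  ultimately show ?thesis
    by (simp add: M_def right_diff_distrib)
qed

definition rayleigh_quotients :: "real \<Rightarrow> real \<Rightarrow> int \<Rightarrow> real \<Rightarrow> real set" where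
  "rayleigh_quotients b \<rho> l h =
     {qform b \<rho> h l v g / wnorm2 \<rho> h v | v g.
        H1_dirichlet_right (h powr (\<rho> - 1/2)) v g \<and> wnorm2 \<rho> h v \<noteq> 0}"

lemma lambda1_eq_Inf: "lambda1 b \<rho> l h = Inf (rayleigh_quotients b \<rho> l h)"
  by (simp add: lambda1_def rayleigh_quotients_def)

context
  fixes h \<rho> :: real
  assumes h: "0 < h" "h < 1" and \<rho>: "0 < \<rho>" "\<rho> < 1/2"
begin

abbreviation \<delta> :: real where "\<delta> \<equiv> h powr (\<rho> - 1/2)"

lemma delta_gt_one: "1 < \<delta>"
  using h \<rho> by (intro one_less_powr_of_less_one) auto

lemma powr_rho_less_one: "h powr \<rho> < 1"
  using h \<rho> powr01_less_one[of h \<rho>] by simp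

lemma wgt_pos: "\<tau> \<in> {0..\<delta>} \<Longrightarrow> 0 < wgt h \<tau>"
  using wgt_bounds(1)[OF h(1)] powr_rho_less_one by fastforce

lemma set_integrable_weighted:
  assumes H: "H1_dirichlet_right \<delta> v g"
  shows "set_integrable lborel {0..\<delta>} (\<lambda>\<tau>. (v \<tau>)\<^sup>2 * wgt h \<tau>)"
    and "set_integrable lborel {0..\<delta>} (\<lambda>\<tau>. (g \<tau>)\<^sup>2 * wgt h \<tau>)"
    and "set_integrable lborel {0..\<delta>} (\<lambda>\<tau>. eff_potential b h l \<tau> * (v \<tau>)\<^sup>2 * wgt h \<tau>)"
proof -
  note v = H1_dirichlet_right_continuous_on[OF H]
  have w: "continuous_on {0..\<delta>} (wgt h)"
    unfolding wgt_def by (intro continuous_intros)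
  show "set_integrable lborel {0..\<delta>} (\<lambda>\<tau>. (v \<tau>)\<^sup>2 * wgt h \<tau>)"
    by (intro borel_integrable_atLeastAtMost' continuous_intros v w)
  show "set_integrable lborel {0..\<delta>} (\<lambda>\<tau>. eff_potential b h l \<tau> * (v \<tau>)\<^sup>2 * wgt h \<tau>)"
    unfolding eff_potential_def
    by (intro borel_integrable_atLeastAtMost' continuous_intros v w) (use wgt_pos in force)
  have [measurable]: "g \<in> borel_measurable lborel"
    using H by (simp add: H1_dirichlet_right_def)
  show "set_integrable lborel {0..\<delta>} (\<lambda>\<tau>. (g \<tau>)\<^sup>2 * wgt h \<tau>)"
  proof (rule set_integrable_bound)
    show "set_integrable lborel {0..\<delta>} (\<lambda>\<tau>. (g \<tau>)\<^sup>2)"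
      using H by (simp add: H1_dirichlet_right_def)
    show "set_borel_measurable lborel {0..\<delta>} (\<lambda>\<tau>. (g \<tau>)\<^sup>2 * wgt h \<tau>)"
      unfolding set_borel_measurable_def wgt_def by measurable
    show "AE \<tau> in lborel. \<tau> \<in> {0..\<delta>} \<longrightarrow> norm ((g \<tau>)\<^sup>2 * wgt h \<tau>) \<le> norm ((g \<tau>)\<^sup>2)"
    proof (intro AE_I2 impI)
      fix \<tau> assume "\<tau> \<in> {0..\<delta>}"
      then have "0 < wgt h \<tau>" "wgt h \<tau> \<le> 1"
        using wgt_pos wgt_bounds(2)[OF h(1)] by auto
      then show "norm ((g \<tau>)\<^sup>2 * wgt h \<tau>) \<le> norm ((g \<tau>)\<^sup>2)"
        by (simp add: abs_mult mult_left_le)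
    qed
  qed
qed

lemmas integrable_on_weighted = set_integrable_weighted[THEN set_borel_integral_eq_integral(1)]

lemma wnorm2_eq_integral:
  assumes "H1_dirichlet_right \<delta> v g"
  shows "wnorm2 \<rho> h v = integral {0..\<delta>} (\<lambda>\<tau>. (v \<tau>)\<^sup>2 * wgt h \<tau>)"
  using interval_integral_eq_integral[OF _ set_integrable_weighted(1)[OF assms]] delta_gt_one
  by (simp add: wnorm2_def zero_ereal_def)

lemma qform_eq_integral:
  assumes H: "H1_dirichlet_right \<delta> v g"
  shows "qform b \<rho> h l v g = integral {0..\<delta>} (\<lambda>\<tau>. (g \<tau>)\<^sup>2 * wgt h \<tau>)
            + integral {0..\<delta>} (\<lambda>\<tau>. eff_potential b h l \<tau> * (v \<tau>)\<^sup>2 * wgt h \<tau>) - (v 0)\<^sup>2"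
proof -
  have "(\<lambda>\<tau>. ((g \<tau>)\<^sup>2 + h / (wgt h \<tau>)\<^sup>2 * (real_of_int l - b/2 * (wgt h \<tau>)\<^sup>2)\<^sup>2 * (v \<tau>)\<^sup>2) * wgt h \<tau>)
      = (\<lambda>\<tau>. (g \<tau>)\<^sup>2 * wgt h \<tau> + eff_potential b h l \<tau> * (v \<tau>)\<^sup>2 * wgt h \<tau>)"
    by (simp add: eff_potential_def distrib_right)
  then have "qform b \<rho> h l v g
      = (LBINT \<tau>=0..\<delta>. (g \<tau>)\<^sup>2 * wgt h \<tau> + eff_potential b h l \<tau> * (v \<tau>)\<^sup>2 * wgt h \<tau>) - (v 0)\<^sup>2"
    unfolding qform_def by simp
  also have "\<dots> = integral {0..\<delta>} (\<lambda>\<tau>. (g \<tau>)\<^sup>2 * wgt h \<tau> + eff_potential b h l \<tau> * (v \<tau>)\<^sup>2 * wgt h \<tau>)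
      - (v 0)\<^sup>2"
    using interval_integral_eq_integral[OF _ set_integral_add(1)[OF set_integrable_weighted(2,3)[OF H]]]
      delta_gt_one by (simp add: zero_ereal_def)
  finally show ?thesis
    by (simp add: integral_add[OF integrable_on_weighted(2,3)[OF H]])
qed

lemma wnorm2_nonneg:
  assumes "H1_dirichlet_right \<delta> v g"
  shows "0 \<le> wnorm2 \<rho> h v"
  unfolding wnorm2_eq_integral[OF assms]
  by (rule integral_nonneg[OF integrable_on_weighted(1)[OF assms]])
    (auto intro!: mult_nonneg_nonneg less_imp_le[OF wgt_pos])

lemma integral_weighted_ge:
  assumes "f integrable_on {0..\<delta>}" "(\<lambda>\<tau>. f \<tau> * wgt h \<tau>) integrable_on {0..\<delta>}"
    and "\<And>\<tau>. \<tau> \<in> {0..\<delta>} \<Longrightarrow> 0 \<le> f \<tau>"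
  shows "(1 - h powr \<rho>) * integral {0..\<delta>} f \<le> integral {0..\<delta>} (\<lambda>\<tau>. f \<tau> * wgt h \<tau>)"
proof -
  have "integral {0..\<delta>} (\<lambda>\<tau>. (1 - h powr \<rho>) * f \<tau>) \<le> integral {0..\<delta>} (\<lambda>\<tau>. f \<tau> * wgt h \<tau>)"
  proof (rule integral_le[OF integrable_on_mult_right[OF assms(1)] assms(2)])
    fix \<tau> assume "\<tau> \<in> {0..\<delta>}"
    then show "(1 - h powr \<rho>) * f \<tau> \<le> f \<tau> * wgt h \<tau>"
      using wgt_bounds(1)[OF h(1), of \<tau> \<rho>] assms(3)[of \<tau>] by (auto simp: mult.commute intro: mult_left_mono)
  qed
  then show ?thesis by simp
qed

lemma weighted_trace_inequality:
  assumes H: "H1_dirichlet_right \<delta> v g"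
  shows "(v 0)\<^sup>2 \<le> 4 / (1 - h powr \<rho>)\<^sup>2 * wnorm2 \<rho> h v + integral {0..\<delta>} (\<lambda>\<tau>. (g \<tau>)\<^sup>2 * wgt h \<tau>)"
proof -
  define c where "c = 1 - h powr \<rho>"
  define s where "s = c / 2"
  define A where "A = integral {0..s} (\<lambda>x. (v x)\<^sup>2)"
  define G where "G = integral {0..\<delta>} (\<lambda>t. (g t)\<^sup>2)"
  have c: "0 < c" "c \<le> 1" using powr_rho_less_one h by (auto simp: c_def)
  have s: "0 < s" "s \<le> \<delta>" using c delta_gt_one by (auto simp: s_def)
  have v2: "(\<lambda>x. (v x)\<^sup>2) integrable_on {0..\<delta>}"
    by (intro integrable_continuous_interval continuous_intros H1_dirichlet_right_continuous_on[OF H])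
  have "c * A \<le> c * integral {0..\<delta>} (\<lambda>x. (v x)\<^sup>2)"
    unfolding A_def using s c
    by (intro mult_left_mono integral_subset_le v2 integrable_on_subinterval[OF v2]) auto
  also have "\<dots> \<le> wnorm2 \<rho> h v"
    unfolding wnorm2_eq_integral[OF H] c_def
    by (rule integral_weighted_ge[OF v2 integrable_on_weighted(1)[OF H]]) simp
  finally have A_le: "c * A \<le> wnorm2 \<rho> h v" .
  have G_le: "c * G \<le> integral {0..\<delta>} (\<lambda>\<tau>. (g \<tau>)\<^sup>2 * wgt h \<tau>)"
    unfolding c_def G_def
    by (rule integral_weighted_ge[OF H1_dirichlet_right_integrable_on(2)[OF H]
          integrable_on_weighted(2)[OF H]]) simp
  have "(v 0)\<^sup>2 = 2 / c * (s * (v 0)\<^sup>2)"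
    using c by (simp add: s_def)
  also have "\<dots> \<le> 2 / c * (2 * A + 2 * s\<^sup>2 * G)"
    unfolding A_def G_def using c by (intro mult_left_mono trace_inequality[OF H s]) auto
  also have "\<dots> = 4 / c\<^sup>2 * (c * A) + c * G"
    using c by (simp add: s_def field_simps power2_eq_square)
  also have "\<dots> \<le> 4 / c\<^sup>2 * wnorm2 \<rho> h v + integral {0..\<delta>} (\<lambda>\<tau>. (g \<tau>)\<^sup>2 * wgt h \<tau>)"
    using A_le G_le by (intro add_mono mult_left_mono) auto
  finally show ?thesis by (simp add: c_def)
qed

lemma qform_lower_bound:
  assumes H: "H1_dirichlet_right \<delta> v g"
  shows "- (4 / (1 - h powr \<rho>)\<^sup>2) * wnorm2 \<rho> h v \<le> qform b \<rho> h l v g"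
proof -
  have "0 \<le> integral {0..\<delta>} (\<lambda>\<tau>. eff_potential b h l \<tau> * (v \<tau>)\<^sup>2 * wgt h \<tau>)"
    by (rule integral_nonneg[OF integrable_on_weighted(3)[OF H]])
      (use h in \<open>auto intro!: mult_nonneg_nonneg eff_potential_nonneg less_imp_le[OF wgt_pos]\<close>)
  then show ?thesis
    using weighted_trace_inequality[OF H] by (simp add: qform_eq_integral[OF H])
qed

lemma qform_gap:
  assumes H: "H1_dirichlet_right \<delta> v g" and "0 \<le> b"
  shows "qform b \<rho> h 0 v g + h * ((real_of_int m)\<^sup>2 - \<bar>real_of_int m\<bar> * b) * wnorm2 \<rho> h v
    \<le> qform b \<rho> h m v g"
proof -
  define k where "k = h * ((real_of_int m)\<^sup>2 - \<bar>real_of_int m\<bar> * b)"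
  note V = integrable_on_weighted(3)[OF H]
  have "k * wnorm2 \<rho> h v = integral {0..\<delta>} (\<lambda>\<tau>. k * ((v \<tau>)\<^sup>2 * wgt h \<tau>))"
    by (simp add: wnorm2_eq_integral[OF H])
  also have "\<dots> \<le> integral {0..\<delta>} (\<lambda>\<tau>. eff_potential b h m \<tau> * (v \<tau>)\<^sup>2 * wgt h \<tau>
                                     - eff_potential b h 0 \<tau> * (v \<tau>)\<^sup>2 * wgt h \<tau>)"
  proof (rule integral_le[OF integrable_on_mult_right[OF integrable_on_weighted(1)[OF H]]
        integrable_diff[OF V V]])
    fix \<tau> assume \<tau>: "\<tau> \<in> {0..\<delta>}"
    have "k \<le> eff_potential b h m \<tau> - eff_potential b h 0 \<tau>"
      unfolding k_def using h assms(2) wgt_pos[OF \<tau>] wgt_bounds(2)[OF h(1)] \<tau>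
      by (intro eff_potential_gap) auto
    then have "k * ((v \<tau>)\<^sup>2 * wgt h \<tau>)
        \<le> (eff_potential b h m \<tau> - eff_potential b h 0 \<tau>) * ((v \<tau>)\<^sup>2 * wgt h \<tau>)"
      using wgt_pos[OF \<tau>] by (intro mult_right_mono) auto
    then show "k * ((v \<tau>)\<^sup>2 * wgt h \<tau>)
        \<le> eff_potential b h m \<tau> * (v \<tau>)\<^sup>2 * wgt h \<tau> - eff_potential b h 0 \<tau> * (v \<tau>)\<^sup>2 * wgt h \<tau>"
      by (simp add: algebra_simps)
  qed
  also have "\<dots> = qform b \<rho> h m v g - qform b \<rho> h 0 v g"
    by (simp add: integral_diff[OF V V] qform_eq_integral[OF H])
  finally show ?thesis by (simp add: k_def)
qed

lemma exists_admissible: "\<exists>v g. H1_dirichlet_right \<delta> v g \<and> wnorm2 \<rho> h v \<noteq> 0"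
proof (intro exI conjI)
  define v where "v \<tau> = \<delta> - \<tau>" for \<tau> :: real
  show H: "H1_dirichlet_right \<delta> v (\<lambda>_. -1)"
    unfolding H1_dirichlet_right_def
    using interval_integral_const(2)[of "-1::real" 0]
    by (auto simp: v_def zero_ereal_def intro!: borel_integrable_atLeastAtMost')
  show "wnorm2 \<rho> h v \<noteq> 0"
  proof
    assume "wnorm2 \<rho> h v = 0"
    then have "((\<lambda>\<tau>. (v \<tau>)\<^sup>2 * wgt h \<tau>) has_integral 0) (cbox 0 \<delta>)"
      using integrable_integral[OF integrable_on_weighted(1)[OF H]]
      by (simp add: wnorm2_eq_integral[OF H])
    then have "(v 0)\<^sup>2 * wgt h 0 = 0"
    proof (rule has_integral_0_cbox_imp_0[of 0 \<delta> "\<lambda>\<tau>. (v \<tau>)\<^sup>2 * wgt h \<tau>" 0, rotated 2])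
      show "continuous_on (cbox 0 \<delta>) (\<lambda>\<tau>. (v \<tau>)\<^sup>2 * wgt h \<tau>)"
        unfolding v_def wgt_def by (intro continuous_intros)
    qed (use delta_gt_one in \<open>auto intro!: mult_nonneg_nonneg less_imp_le[OF wgt_pos]\<close>)
    then show False
      using delta_gt_one by (simp add: v_def wgt_def)
  qed
qed

lemma rayleigh_quotients_nonempty: "rayleigh_quotients b \<rho> l h \<noteq> {}"
  using exists_admissible by (auto simp: rayleigh_quotients_def)

lemma rayleigh_quotients_lower_bound:
  assumes "x \<in> rayleigh_quotients b \<rho> l h"
  shows "- (4 / (1 - h powr \<rho>)\<^sup>2) \<le> x"
proof -
  obtain v g where x: "x = qform b \<rho> h l v g / wnorm2 \<rho> h v"
    and H: "H1_dirichlet_right \<delta> v g" and "wnorm2 \<rho> h v \<noteq> 0"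
    using assms by (auto simp: rayleigh_quotients_def)
  then have "0 < wnorm2 \<rho> h v"
    using wnorm2_nonneg[OF H] by simp
  then show ?thesis
    using qform_lower_bound[OF H, of b l] by (simp add: x le_divide_eq)
qed

lemma bdd_below_rayleigh_quotients: "bdd_below (rayleigh_quotients b \<rho> l h)"
  by (rule bdd_belowI) (rule rayleigh_quotients_lower_bound)

lemma lambda1_lower_bound: "- (4 / (1 - h powr \<rho>)\<^sup>2) \<le> lambda1 b \<rho> l h"
  unfolding lambda1_eq_Inf
  by (intro cInf_greatest rayleigh_quotients_nonempty rayleigh_quotients_lower_bound)

lemma lambda1_gap:
  assumes "0 \<le> b"
  shows "lambda1 b \<rho> 0 h + h * ((real_of_int m)\<^sup>2 - \<bar>real_of_int m\<bar> * b) \<le> lambda1 b \<rho> m h"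
  unfolding lambda1_eq_Inf
proof (rule cInf_greatest[OF rayleigh_quotients_nonempty])
  define k where "k = h * ((real_of_int m)\<^sup>2 - \<bar>real_of_int m\<bar> * b)"
  fix x assume "x \<in> rayleigh_quotients b \<rho> m h"
  then obtain v g where x: "x = qform b \<rho> h m v g / wnorm2 \<rho> h v"
    and H: "H1_dirichlet_right \<delta> v g" and N: "wnorm2 \<rho> h v \<noteq> 0"
    by (auto simp: rayleigh_quotients_def)
  have N_pos: "0 < wnorm2 \<rho> h v"
    using N wnorm2_nonneg[OF H] by simp
  have "qform b \<rho> h 0 v g / wnorm2 \<rho> h v \<in> rayleigh_quotients b \<rho> 0 h"
    using H N by (auto simp: rayleigh_quotients_def)
  then have "Inf (rayleigh_quotients b \<rho> 0 h) \<le> qform b \<rho> h 0 v g / wnorm2 \<rho> h v"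
    by (rule cInf_lower[OF _ bdd_below_rayleigh_quotients])
  also have "\<dots> + k = (qform b \<rho> h 0 v g + k * wnorm2 \<rho> h v) / wnorm2 \<rho> h v"
    using N by (simp add: add_divide_distrib)
  also have "\<dots> \<le> x"
    unfolding x k_def using N_pos qform_gap[OF H assms]
    by (intro divide_right_mono) auto
  finally show "Inf (rayleigh_quotients b \<rho> 0 h) + k \<le> x" by simp
qed

end

theorem proposition2p6:
  fixes b \<rho> h :: real and m :: int
  assumes "b > 0" and "1/4 < \<rho>" and "\<rho> < 1/2" and "0 < h" and "h < 1"
    and "\<bar>real_of_int m\<bar> > (1 + sqrt 2) * b / 2"
  shows "lambda1 b \<rho> m h > (INF l::int. lambda1 b \<rho> l h)"
proof -
  have h: "0 < h" "h < 1" and \<rho>: "0 < \<rho>" "\<rho> < 1/2" using assms by auto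
  have "1 < sqrt 2" by simp
  then have "b < (1 + sqrt 2) * b / 2"
    using assms(1) by (simp add: field_simps)
  then have "b < \<bar>real_of_int m\<bar>"
    using assms(6) by linarith
  then have "b * \<bar>real_of_int m\<bar> < \<bar>real_of_int m\<bar> * \<bar>real_of_int m\<bar>"
    using assms(1) by (intro mult_strict_right_mono) auto
  then have gap: "0 < h * ((real_of_int m)\<^sup>2 - \<bar>real_of_int m\<bar> * b)"
    using h by (simp add: power2_eq_square abs_mult_self_eq mult.commute)
  have "bdd_below (range (\<lambda>l. lambda1 b \<rho> l h))"
    by (rule bdd_belowI2) (rule lambda1_lower_bound[OF h \<rho>])
  then have "(INF l. lambda1 b \<rho> l h) \<le> lambda1 b \<rho> 0 h"
    by (rule cINF_lower) simp
  also have "\<dots> < lambda1 b \<rho> 0 h + h * ((real_of_int m)\<^sup>2 - \<bar>real_of_int m\<bar> * b)"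
    using gap by simp
  also have "\<dots> \<le> lambda1 b \<rho> m h"
    using lambda1_gap[OF h \<rho>] assms(1) by simp
  finally show ?thesis .
qed

end
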